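(* Let $r\ge1$ and let $G_r(t,u,v,z)=\sum_w t^{\mathrm{length}(w)}u^{\mathrm{asc}(w)}v^{\mathrm{last}(w)}z^{\mathrm{zeros}(w)}$, summed over all ascent sequences $w=(x_1,\dots,x_n)$ with $n\ge r+1$, $x_1=\dots=x_r=0$ and $x_{r+1}=1$. For $s\ge 1$ put $\delta_s=u-(1-t)^s(u-1)$, $\gamma_s=u-(1-zt)(1-t)^{s-1}(u-1)$, $\bar\delta_s=uv-(1-t)^s(uv-1)$, $\bar\gamma_s=uv-(1-zt)(1-t)^{s-1}(uv-1)$, and $\delta_0=\gamma_0=\bar\delta_0=\bar\gamma_0=1$. Then $$G_r(t,u,v,z)=\frac{t^{r+1}z^ru}{v\delta_1-1}\Big(v(v-1)+t(1-u)(z(v-1)-v)\sum_{s\ge0}\frac{u^s(1-t)^s}{\delta_s\delta_{s+1}\prod_{i=1}^{s+1}\gamma_i}+uv^3t(1-uv)\sum_{s\ge0}\frac{(uv)^s(1-t)^s}{\bar\delta_s\bar\delta_{s+1}\prod_{i=1}^{s+1}\bar\gamma_i}\Big).$$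
   Context: An ascent sequence of length $n$ is a sequence $(x_1,\dots,x_n)$ of nonnegative integers with $x_1=0$ and $x_i\in[0,1+\mathrm{asc}(x_1,\dots,x_{i-1})]$ for $2\le i\le n$, where $\mathrm{asc}(y_1,\dots,y_k)=|\{1\le j<k: y_j<y_{j+1}\}|$. For an ascent sequence $w$: $\mathrm{length}(w)$ is its number of entries, $\mathrm{asc}(w)$ its number of ascents, $\mathrm{last}(w)$ its rightmost entry, and $\mathrm{zeros}(w)$ its number of entries equal to 0. Identities are of formal power series in $t,u,v,z$ over $\mathbb{Q}$; $v\delta_1-1$ has constant term $-1$ and each $\delta_s,\gamma_s,\bar\delta_s,\bar\gamma_s$ has constant term $1$, so all quotients are formal power series, and the $s$-th summands are divisible by $u^s$, so the sums converge formally. *)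

theory Defs
  imports "HOL-Computational_Algebra.Formal_Power_Series"
begin

(* Ascent sequences as lists of naturals; list index 0 corresponds to x_1. *)

definition asc :: "nat list \<Rightarrow> nat" where
  "asc w = card {j. Suc j < length w \<and> w ! j < w ! Suc j}"

definition zeros :: "nat list \<Rightarrow> nat" where
  "zeros w = length (filter (\<lambda>x. x = 0) w)"

definition ascent_seq :: "nat list \<Rightarrow> bool" where
  "ascent_seq w \<longleftrightarrow> w \<noteq> [] \<and> w ! 0 = 0 \<and>
     (\<forall>i. 1 \<le> i \<and> i < length w \<longrightarrow> w ! i \<le> 1 + asc (take i w))"

definition Gseqs :: "nat \<Rightarrow> nat list set" where
  "Gseqs r = {w. ascent_seq w \<and> length w \<ge> r + 1 \<and> (\<forall>i<r. w ! i = 0) \<and> w ! r = 1}"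

(* Formal power series in u,t,v,z over Q, nested: the outermost variable is u,
   then t, then v, and the innermost is z. *)
type_synonym mfps = "rat fps fps fps fps"

definition U :: mfps where "U = fps_X"
definition T :: mfps where "T = fps_const fps_X"
definition V :: mfps where "V = fps_const (fps_const fps_X)"
definition Z :: mfps where "Z = fps_const (fps_const (fps_const fps_X))"

definition G :: "nat \<Rightarrow> mfps" where
  "G r = Abs_fps (\<lambda>a. Abs_fps (\<lambda>n. Abs_fps (\<lambda>l. Abs_fps (\<lambda>k.
      of_nat (card {w \<in> Gseqs r. length w = n \<and> asc w = a \<and> last w = l \<and> zeros w = k})))))"

definition delta :: "nat \<Rightarrow> mfps" where
  "delta s = (if s = 0 then 1 else U - (1 - T) ^ s * (U - 1))"
definition gamma :: "nat \<Rightarrow> mfps" where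
  "gamma s = (if s = 0 then 1 else U - (1 - Z * T) * (1 - T) ^ (s - 1) * (U - 1))"
definition deltabar :: "nat \<Rightarrow> mfps" where
  "deltabar s = (if s = 0 then 1 else U * V - (1 - T) ^ s * (U * V - 1))"
definition gammabar :: "nat \<Rightarrow> mfps" where
  "gammabar s = (if s = 0 then 1 else U * V - (1 - Z * T) * (1 - T) ^ (s - 1) * (U * V - 1))"

end

theory Submission
  imports Defs
begin

unbundle fps_syntax

text \<open>
  Removing the last entry of a sequence yields a functional equation of kernel type,
    (v delta_1 - 1) G(v) = (v - 1) v B + t (z (v - 1) - v) G(1) + t u v^2 G(1)[u := u v],
  where B = t^(r+1) z^r u is the weight of 0^r 1 divided by v and G(1) = G_r(t,u,1,z).
  The kernel vanishes at v = 1/delta_1. Substituting this root eliminates G(v) and leaves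
    delta_1 gamma_1 G(1) = B (1 - u) + u G(1)[u := u/delta_1],
  which has a unique solution. It is found by iteration: the substitution u := u/delta_1,
  followed by multiplication with delta_1, turns delta_s into delta_(s+1) and gamma_s into
  gamma_(s+1). Inserting the solution and its image under u := u v into the functional
  equation gives the formula.
\<close>

section \<open>Formal power series\<close>

definition fps_vanishes_below :: "'a::zero fps \<Rightarrow> nat \<Rightarrow> bool" where
  "fps_vanishes_below F m \<longleftrightarrow> (\<forall>b<m. F $ b = 0)"

lemma fps_vanishes_below_X_power_mult: "fps_vanishes_below (fps_X ^ m * F) m"
  by (simp add: fps_vanishes_below_def fps_X_power_mult_nth)

lemma fps_vanishes_below_mult_right:
  "fps_vanishes_below H m \<Longrightarrow> fps_vanishes_below (F * H :: 'a::comm_ring_1 fps) m"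
  unfolding fps_vanishes_below_def fps_mult_nth by (auto intro!: sum.neutral)

lemma fps_vanishes_below_mult_left:
  "fps_vanishes_below F m \<Longrightarrow> fps_vanishes_below (F * H :: 'a::comm_ring_1 fps) m"
  using fps_vanishes_below_mult_right[of F m H] by (simp add: mult.commute)

lemma fps_vanishes_below_power:
  assumes "g $ 0 = 0"
  shows "fps_vanishes_below (g ^ i :: 'a::comm_ring_1 fps) i"
proof (induction i)
  case (Suc i)
  have "g $ j * (g ^ i) $ (b - j) = 0" if "b < Suc i" "j \<le> b" for b j
    using Suc that assms by (cases "j = 0") (auto simp: fps_vanishes_below_def)
  then have "(g ^ Suc i) $ b = 0" if "b < Suc i" for b
    unfolding power_Suc fps_mult_nth using that by (intro sum.neutral) auto
  then show ?case by (simp add: fps_vanishes_below_def)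
qed (simp add: fps_vanishes_below_def)

lemma fps_vanishes_below_compose:
  "fps_vanishes_below F m \<Longrightarrow> fps_vanishes_below (F oo g :: 'a::comm_ring_1 fps) m"
  unfolding fps_vanishes_below_def fps_compose_nth by (auto intro!: sum.neutral)

lemma sums_fps_vanishing:
  fixes f :: "nat \<Rightarrow> 'a::ab_group_add fps"
  assumes "\<And>s. fps_vanishes_below (f s) s"
  shows "f sums Abs_fps (\<lambda>a. \<Sum>s\<le>a. f s $ a)"
  unfolding sums_def
proof (rule tendsto_fpsI)
  fix a
  show "\<forall>\<^sub>F n in sequentially. (\<Sum>i<n. f i) $ a = Abs_fps (\<lambda>a. \<Sum>s\<le>a. f s $ a) $ a"
  proof (rule eventually_sequentiallyI[of "Suc a"])
    fix n assume "Suc a \<le> n"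
    then have "(\<Sum>i<n. f i $ a) = (\<Sum>i\<le>a. f i $ a)"
      using assms by (intro sum.mono_neutral_right) (auto simp: fps_vanishes_below_def)
    then show "(\<Sum>i<n. f i) $ a = Abs_fps (\<lambda>a. \<Sum>s\<le>a. f s $ a) $ a"
      by (simp add: fps_sum_nth)
  qed
qed

lemma suminf_fps_vanishing_nth:
  fixes f :: "nat \<Rightarrow> 'a::ab_group_add fps"
  assumes "\<And>s. fps_vanishes_below (f s) s"
  shows "suminf f $ a = (\<Sum>s\<le>a. f s $ a)"
proof -
  have "suminf f = Abs_fps (\<lambda>a. \<Sum>s\<le>a. f s $ a)"
    by (rule sums_unique[OF sums_fps_vanishing[OF assms], symmetric])
  then show ?thesis by simp
qed

lemma sums_fps_local_map:
  fixes F :: "'a::ab_group_add fps \<Rightarrow> 'b::ab_group_add fps"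
  assumes "f sums X"
    and additive: "\<And>(A::nat set) g. finite A \<Longrightarrow> F (sum g A) = (\<Sum>i\<in>A. F (g i))"
    and local: "\<And>x y a. (\<forall>i\<le>a. x $ i = y $ i) \<Longrightarrow> F x $ a = F y $ a"
  shows "(\<lambda>s. F (f s)) sums F X"
  unfolding sums_def
proof (rule tendsto_fpsI)
  fix a
  have "\<forall>\<^sub>F n in sequentially. \<forall>i\<in>{..a}. (\<Sum>j<n. f j) $ i = X $ i"
    using assms(1) unfolding sums_def tendsto_fps_iff by (intro eventually_ball_finite) auto
  then show "\<forall>\<^sub>F n in sequentially. (\<Sum>i<n. F (f i)) $ a = F X $ a"
  proof (rule eventually_mono)
    fix n assume "\<forall>i\<in>{..a}. (\<Sum>j<n. f j) $ i = X $ i"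
    then have "F (\<Sum>j<n. f j) $ a = F X $ a" by (intro local) auto
    then show "(\<Sum>i<n. F (f i)) $ a = F X $ a" using additive[of "{..<n}" f] by simp
  qed
qed

lemma suminf_mult_left_fps:
  fixes f :: "nat \<Rightarrow> 'a::comm_ring_1 fps"
  assumes "\<And>s. fps_vanishes_below (f s) s"
  shows "c * suminf f = (\<Sum>s. c * f s)"
proof -
  have "(\<lambda>s. c * f s) sums (c * suminf f)"
  proof (rule sums_fps_local_map[where F = "\<lambda>x. c * x"])
    show "f sums suminf f"
      using sums_fps_vanishing[OF assms] sums_unique by metis
    show "(c * x) $ a = (c * y) $ a" if "\<forall>i\<le>a. x $ i = y $ i" for x y :: "'a fps" and a
      unfolding fps_mult_nth using that by (intro sum.cong) auto
  qed (simp add: sum_distrib_left)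
  then show ?thesis by (rule sums_unique)
qed

lemma suminf_compose_fps:
  fixes f :: "nat \<Rightarrow> 'a::comm_ring_1 fps"
  assumes "\<And>s. fps_vanishes_below (f s) s"
  shows "suminf f oo g = (\<Sum>s. f s oo g)"
proof -
  have "(\<lambda>s. f s oo g) sums (suminf f oo g)"
  proof (rule sums_fps_local_map[where F = "\<lambda>x. x oo g"])
    show "f sums suminf f"
      using sums_fps_vanishing[OF assms] sums_unique by metis
    show "(x oo g) $ a = (y oo g) $ a" if "\<forall>i\<le>a. x $ i = y $ i" for x y :: "'a fps" and a
      unfolding fps_compose_nth using that by (intro sum.cong) auto
  qed (simp add: fps_compose_sum_distrib)
  then show ?thesis by (rule sums_unique)
qed

lemma suminf_fps_split_head:
  fixes f :: "nat \<Rightarrow> 'a::ab_group_add fps"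
  assumes "\<And>s. fps_vanishes_below (f s) s"
  shows "suminf f = f 0 + (\<Sum>s. f (Suc s))"
proof (rule fps_ext)
  fix a
  have shifted: "fps_vanishes_below (f (Suc s)) s" for s
    using assms[of "Suc s"] by (simp add: fps_vanishes_below_def)
  have "suminf f $ a = f 0 $ a + (\<Sum>s<a. f (Suc s) $ a)"
    unfolding suminf_fps_vanishing_nth[OF assms]
    by (cases a) (simp, simp only: sum.atMost_Suc_shift lessThan_Suc_atMost)
  also have "(\<Sum>s<a. f (Suc s) $ a) = (\<Sum>s\<le>a. f (Suc s) $ a)"
    using assms[of "Suc a"] by (simp add: fps_vanishes_below_def lessThan_Suc_atMost[symmetric])
  finally show "suminf f $ a = (f 0 + (\<Sum>s. f (Suc s))) $ a"
    by (simp add: suminf_fps_vanishing_nth[OF shifted])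
qed

lemma fps_vanishes_below_compose_minus_partial:
  fixes F g :: "'a::comm_ring_1 fps"
  assumes "g $ 0 = 0"
  shows "fps_vanishes_below ((F oo g) - (\<Sum>i\<le>a. fps_const (F $ i) * g ^ i)) (Suc a)"
  unfolding fps_vanishes_below_def
proof (intro allI impI)
  fix b assume "b < Suc a"
  have "(g ^ i) $ b = 0" if "b < i" for i
    using fps_vanishes_below_power[OF assms, of i] that by (simp add: fps_vanishes_below_def)
  then have "(\<Sum>i\<le>a. F $ i * (g ^ i) $ b) = (\<Sum>i=0..b. F $ i * (g ^ i) $ b)"
    using \<open>b < Suc a\<close> by (intro sum.mono_neutral_right) auto
  then show "((F oo g) - (\<Sum>i\<le>a. fps_const (F $ i) * g ^ i)) $ b = 0"
    by (simp add: fps_compose_nth fps_sum_nth)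
qed

lemma fps_const_sum: "fps_const (sum f A) = (\<Sum>x\<in>A. fps_const (f x))"
  by (induction A rule: infinite_finite_induct) (simp_all flip: fps_const_add)

lemma mfps_eqI: "(\<And>a n l k. F $ a $ n $ l $ k = H $ a $ n $ l $ k) \<Longrightarrow> F = (H :: mfps)"
  by (intro fps_ext) blast

definition const_term :: "mfps \<Rightarrow> rat" where
  "const_term F = F $ 0 $ 0 $ 0 $ 0"

lemma const_term_simps [simp]:
  "const_term (F * H) = const_term F * const_term H"
  "const_term (F + H) = const_term F + const_term H"
  "const_term (F - H) = const_term F - const_term H"
  "const_term (F ^ n) = const_term F ^ n"
  "const_term 1 = 1" "const_term U = 0" "const_term T = 0" "const_term V = 0" "const_term Z = 0"
  by (simp_all add: const_term_def U_def T_def V_def Z_def fps_nth_power_0)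

lemma const_term_prod [simp]: "const_term (prod f A) = (\<Prod>i\<in>A. const_term (f i))"
  by (induction A rule: infinite_finite_induct) (simp_all add: const_term_def)

lemma fps_right_inverse_ring:
  fixes f :: "'a::{ring_1,inverse} fps"
  assumes "f $ 0 * inverse (f $ 0) = 1"
  shows "f * inverse f = 1"
  using fps_right_inverse[OF assms] by (simp add: fps_inverse_def)

lemma mfps_right_inverse: "const_term F \<noteq> 0 \<Longrightarrow> F * inverse F = 1"
  unfolding const_term_def by (intro fps_right_inverse_ring) simp

lemma mfps_inverse_unique:
  assumes "const_term F \<noteq> 0" "F * H = 1"
  shows "inverse F = H"
proof -
  have "inverse F = inverse F * (F * H)" using assms(2) by simp
  also have "\<dots> = (F * inverse F) * H" by (simp only: ac_simps)
  also have "\<dots> = H" using mfps_right_inverse[OF assms(1)] by simp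
  finally show ?thesis .
qed

section \<open>Ascent sequences\<close>

lemma finite_ascent_positions: "finite {j. Suc j < length w \<and> w ! j < w ! Suc j}"
  by (rule finite_subset[of _ "{..<length w}"]) auto

lemma asc_snoc:
  assumes "w \<noteq> []"
  shows "asc (w @ [x]) = asc w + of_bool (last w < x)"
proof -
  let ?A = "{j. Suc j < length w \<and> w ! j < w ! Suc j}"
  have "{j. Suc j < length (w @ [x]) \<and> (w @ [x]) ! j < (w @ [x]) ! Suc j}
      = (if last w < x then insert (length w - 1) ?A else ?A)" (is "?L = _")
  proof (rule set_eqI)
    fix j
    show "j \<in> ?L \<longleftrightarrow> j \<in> (if last w < x then insert (length w - 1) ?A else ?A)"
      using assms
      by (cases "Suc j < length w"; cases "j = length w - 1") (auto simp: nth_append last_conv_nth)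
  qed
  moreover have "length w - 1 \<notin> ?A" by auto
  ultimately show ?thesis
    unfolding asc_def using finite_ascent_positions[of w] by simp
qed

lemma asc_take_le: "asc (take i w) \<le> asc w"
  unfolding asc_def by (rule card_mono[OF finite_ascent_positions]) auto

lemma asc_le_length: "asc w \<le> length w - 1"
proof -
  have "asc w \<le> card {..<length w - 1}"
    unfolding asc_def by (rule card_mono) auto
  then show ?thesis by simp
qed

lemma asc_replicate: "asc (replicate m x) = 0"
proof -
  have none: "{j. Suc j < m \<and> replicate m x ! j < replicate m x ! Suc j} = {}" by auto
  show ?thesis unfolding asc_def length_replicate none by simp
qed

lemma zeros_snoc: "zeros (w @ [x]) = zeros w + of_bool (x = 0)"
  by (simp add: zeros_def)

lemma ascent_seq_snoc:
  assumes "w \<noteq> []"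
  shows "ascent_seq (w @ [x]) \<longleftrightarrow> ascent_seq w \<and> x \<le> 1 + asc w"
proof -
  have split_last: "(\<forall>i. 1 \<le> i \<and> i < Suc (length w) \<longrightarrow> P i)
      \<longleftrightarrow> (\<forall>i. 1 \<le> i \<and> i < length w \<longrightarrow> P i) \<and> P (length w)" for P
    using assms by (auto simp: less_Suc_eq Suc_le_eq)
  show ?thesis
    unfolding ascent_seq_def length_append_singleton split_last using assms
    by (auto simp: nth_append)
qed

lemma ascent_seq_nth_le:
  assumes "ascent_seq w" "i < length w"
  shows "w ! i \<le> i"
proof (cases "i = 0")
  case True
  then show ?thesis using assms by (simp add: ascent_seq_def)
next
  case False
  then have "w ! i \<le> 1 + asc (take i w)" using assms unfolding ascent_seq_def by auto
  also have "asc (take i w) \<le> length (take i w) - 1" by (rule asc_le_length)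
  finally show ?thesis using False assms by auto
qed

lemma ascent_seq_last_le:
  assumes "ascent_seq w"
  shows "last w \<le> asc w + 1"
proof (cases "length w = 1")
  case True
  then show ?thesis using assms by (simp add: ascent_seq_def last_conv_nth)
next
  case False
  have "w \<noteq> []" using assms by (simp add: ascent_seq_def)
  then have "2 \<le> length w" using False by (cases w) (auto simp: Suc_le_eq)
  then have "1 \<le> length w - 1" "length w - 1 < length w" by linarith+
  then have "w ! (length w - 1) \<le> 1 + asc (take (length w - 1) w)"
    using assms unfolding ascent_seq_def by blast
  then have "last w \<le> 1 + asc (take (length w - 1) w)"
    using \<open>w \<noteq> []\<close> by (simp add: last_conv_nth)
  also have "\<dots> \<le> 1 + asc w" using asc_take_le by simp
  finally show ?thesis by simp
qed

definition Gseqs_length :: "nat \<Rightarrow> nat \<Rightarrow> nat list set" where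
  "Gseqs_length r n = {w \<in> Gseqs r. length w = n}"

lemma finite_Gseqs_length: "finite (Gseqs_length r n)"
proof (rule finite_subset)
  show "Gseqs_length r n \<subseteq> {w. set w \<subseteq> {..n} \<and> length w = n}"
    using ascent_seq_nth_le by (fastforce simp: Gseqs_length_def Gseqs_def in_set_conv_nth)
  show "finite {w. set w \<subseteq> {..n} \<and> length w = n}"
    by (rule finite_lists_length_eq) simp
qed

lemma Gseqs_length_le: "n \<le> r \<Longrightarrow> Gseqs_length r n = {}"
  by (auto simp: Gseqs_length_def Gseqs_def)

lemma Gseqs_length_Suc:
  assumes "r \<ge> 1"
  shows "Gseqs_length r (Suc r) = {replicate r 0 @ [1]}"
proof -
  have "ascent_seq (replicate r 0 @ [1])"
    using assms ascent_seq_snoc[of "replicate r 0" 1]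
    by (simp add: ascent_seq_def asc_replicate)
  moreover have "w = replicate r 0 @ [1]"
    if "length w = Suc r" "\<forall>i<r. w ! i = 0" "w ! r = 1" for w :: "nat list"
    by (rule nth_equalityI) (use that in \<open>auto simp: nth_append less_Suc_eq\<close>)
  ultimately show ?thesis
    by (auto simp: Gseqs_length_def Gseqs_def nth_append)
qed

lemma Gseqs_snoc:
  assumes "length w \<ge> r + 1"
  shows "w @ [x] \<in> Gseqs r \<longleftrightarrow> w \<in> Gseqs r \<and> x \<le> 1 + asc w"
proof -
  have "w \<noteq> []" using assms by auto
  then show ?thesis
    unfolding Gseqs_def mem_Collect_eq ascent_seq_snoc[OF \<open>w \<noteq> []\<close>] using assms
    by (auto simp: nth_append)
qed

text \<open>G_r(t,u,1,z), as a series constant in v.\<close>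

definition G_v1 :: "nat \<Rightarrow> mfps" where
  "G_v1 r = Abs_fps (\<lambda>a. Abs_fps (\<lambda>n. fps_const (Abs_fps (\<lambda>k.
      of_nat (card {w \<in> Gseqs_length r n. asc w = a \<and> zeros w = k})))))"

definition base_term :: "nat \<Rightarrow> mfps" where
  "base_term r = T ^ (r + 1) * Z ^ r * U"

lemma G_nth_card:
  "G r $ a $ n $ l $ k = of_nat (card {w \<in> Gseqs_length r n. asc w = a \<and> last w = l \<and> zeros w = k})"
  by (simp add: G_def Gseqs_length_def conj_assoc)

lemma G_nth:
  "G r $ a $ n $ l $ k = (\<Sum>w\<in>Gseqs_length r n. of_bool (asc w = a \<and> last w = l \<and> zeros w = k))"
  by (simp add: G_nth_card finite_Gseqs_length Int_def)

lemma G_v1_nth: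
  "G_v1 r $ a $ n $ l $ k
    = of_bool (l = 0) * (\<Sum>w\<in>Gseqs_length r n. of_bool (asc w = a \<and> zeros w = k))"
  by (simp add: G_v1_def finite_Gseqs_length Int_def)

lemma U_times_V: "U * V = fps_const (fps_const fps_X) * fps_X"
  by (simp add: U_def V_def mult.commute)

lemma G_v1_compose_UV_nth:
  "(G_v1 r oo (U * V)) $ a $ n $ l $ k = of_bool (l = a) * G_v1 r $ a $ n $ 0 $ k"
  unfolding U_times_V fps_compose_linear
  by (simp add: G_v1_def fps_const_power fps_X_power_mult_nth)

lemma U_mult_nth: "(U * F) $ a $ n $ l $ k = of_bool (a \<noteq> 0) * F $ (a - 1) $ n $ l $ k"
  by (simp add: U_def)

lemma T_mult_nth: "(T * F) $ a $ n $ l $ k = of_bool (n \<noteq> 0) * F $ a $ (n - 1) $ l $ k"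
  by (simp add: T_def)

lemma V_mult_nth: "(V * F) $ a $ n $ l $ k = of_bool (l \<noteq> 0) * F $ a $ n $ (l - 1) $ k"
  by (simp add: V_def)

lemma Z_mult_nth: "(Z * F) $ a $ n $ l $ k = of_bool (k \<noteq> 0) * F $ a $ n $ l $ (k - 1)"
  by (simp add: Z_def)

lemma base_term_nth: "base_term r $ a $ n $ l $ k = of_bool (a = 1 \<and> n = r + 1 \<and> l = 0 \<and> k = r)"
  by (auto simp: base_term_def mult.commute[of _ U] U_def T_def Z_def fps_const_power
      fps_X_power_mult_nth)

lemma G_nth_0: "G r $ a $ 0 $ l $ k = 0"
  by (simp add: G_nth Gseqs_length_le)

lemma G_nth_eq_0_if_last_big:
  assumes "a + 1 < l"
  shows "G r $ a $ n $ l $ k = 0"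
proof -
  have "\<not> (asc w = a \<and> last w = l \<and> zeros w = k)" if "w \<in> Gseqs_length r n" for w
    using that ascent_seq_last_le[of w] assms by (auto simp: Gseqs_length_def Gseqs_def)
  then show ?thesis unfolding G_nth by (intro sum.neutral) simp
qed

lemma Gseqs_length_Suc_eq_image:
  assumes "n \<ge> r + 1"
  shows "{v \<in> Gseqs_length r (Suc n). asc v = a \<and> last v = l \<and> zeros v = k}
    = (\<lambda>w. w @ [l]) ` {w \<in> Gseqs_length r n. l \<le> 1 + asc w
        \<and> asc w + of_bool (last w < l) = a \<and> zeros w + of_bool (l = 0) = k}"
    (is "?S = (\<lambda>w. w @ [l]) ` {w \<in> _. ?P w}")
proof -
  have snoc_in_S: "w @ [l] \<in> ?S \<longleftrightarrow> w \<in> Gseqs_length r n \<and> ?P w" if "length w = n" for w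
  proof -
    have "w \<noteq> []" using that assms by auto
    then show ?thesis
      using that assms Gseqs_snoc[of r w l] asc_snoc[of w l] zeros_snoc[of w l]
      by (auto simp: Gseqs_length_def)
  qed
  show ?thesis
  proof (intro equalityI subsetI)
    fix v assume "v \<in> ?S"
    then have "v \<noteq> []" "last v = l" "length v = Suc n" by (auto simp: Gseqs_length_def)
    define w where "w = butlast v"
    have v: "v = w @ [l]" and "length w = n"
      using \<open>v \<noteq> []\<close> \<open>last v = l\<close> \<open>length v = Suc n\<close>
      by (simp_all add: w_def) (metis append_butlast_last_id)
    then have "w \<in> Gseqs_length r n" "?P w" using snoc_in_S \<open>v \<in> ?S\<close> by simp_all
    then show "v \<in> (\<lambda>w. w @ [l]) ` {w \<in> Gseqs_length r n. ?P w}" using v by blast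
  next
    fix v assume "v \<in> (\<lambda>w. w @ [l]) ` {w \<in> Gseqs_length r n. ?P w}"
    then obtain w where "v = w @ [l]" "w \<in> Gseqs_length r n" "?P w" by blast
    then show "v \<in> ?S" using snoc_in_S by (simp add: Gseqs_length_def)
  qed
qed

lemma G_nth_Suc:
  assumes "r \<ge> 1"
  shows "G r $ a $ Suc n $ l $ k = of_bool (n = r \<and> a = 1 \<and> l = 1 \<and> k = r)
    + (\<Sum>w\<in>Gseqs_length r n. of_bool (l \<le> 1 + asc w \<and> asc w + of_bool (last w < l) = a
        \<and> zeros w + of_bool (l = 0) = k))"
    (is "_ = _ + (\<Sum>w\<in>_. of_bool (?P w))")
proof (cases "n \<ge> r + 1")
  case True
  have "G r $ a $ Suc n $ l $ k = of_nat (card ((\<lambda>w. w @ [l]) ` {w \<in> Gseqs_length r n. ?P w}))"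
    unfolding G_nth_card Gseqs_length_Suc_eq_image[OF True] ..
  also have "\<dots> = of_nat (card (Gseqs_length r n \<inter> {w. ?P w}))"
    by (subst card_image) (auto simp: inj_on_def Int_def)
  finally show ?thesis
    using True by (simp add: finite_Gseqs_length)
next
  case False
  then have "Gseqs_length r n = {}" by (intro Gseqs_length_le) simp
  moreover have "Gseqs_length r (Suc n) = (if n = r then {replicate r 0 @ [1]} else {})"
    using False Gseqs_length_Suc[OF assms] Gseqs_length_le[of "Suc n" r] by auto
  moreover have "asc (replicate r 0 @ [1]) = 1"
    using assms asc_snoc[of "replicate r 0" 1] by (simp add: asc_replicate)
  ultimately show ?thesis by (auto simp: G_nth zeros_def)
qed

section \<open>The functional equation\<close>

definition delta1 :: mfps where
  "delta1 = 1 - T + T * U"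

definition gamma1 :: mfps where
  "gamma1 = 1 - Z * T + Z * T * U"

lemma delta_1: "delta 1 = delta1"
  by (simp add: delta_def delta1_def algebra_simps)

lemma gamma_1: "gamma 1 = gamma1"
  by (simp add: gamma_def gamma1_def algebra_simps)

text \<open>
  The contribution of a word of length n with b ascents, last entry p and z zeros to the
  coefficient of u^a t^(n+1) v^l z^k on either side of the functional equation.
\<close>

definition kernel_lhs_weight :: "nat \<Rightarrow> nat \<Rightarrow> nat \<Rightarrow> nat \<Rightarrow> nat \<Rightarrow> nat \<Rightarrow> rat" where
  "kernel_lhs_weight a l k b p z =
     of_bool (l \<noteq> 0)
       * of_bool (l - 1 \<le> 1 + b \<and> b + of_bool (p < l - 1) = a \<and> z + of_bool (l - 1 = 0) = k)
   - of_bool (l \<noteq> 0) * of_bool (b = a \<and> p = l - 1 \<and> z = k)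
   + of_bool (l \<noteq> 0) * (of_bool (a \<noteq> 0) * of_bool (b = a - 1 \<and> p = l - 1 \<and> z = k))
   - of_bool (l \<le> 1 + b \<and> b + of_bool (p < l) = a \<and> z + of_bool (l = 0) = k)"

definition kernel_rhs_weight :: "nat \<Rightarrow> nat \<Rightarrow> nat \<Rightarrow> nat \<Rightarrow> nat \<Rightarrow> nat \<Rightarrow> rat" where
  "kernel_rhs_weight a l k b p z =
     of_bool (k \<noteq> 0) * (of_bool (l \<noteq> 0) * (of_bool (l - 1 = 0) * of_bool (b = a \<and> z = k - 1)))
   - of_bool (k \<noteq> 0) * (of_bool (l = 0) * of_bool (b = a \<and> z = k - 1))
   - of_bool (l \<noteq> 0) * (of_bool (l - 1 = 0) * of_bool (b = a \<and> z = k))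
   + of_bool (a \<noteq> 0) * (of_bool (l \<noteq> 0) * (of_bool (l - 1 \<noteq> 0)
       * (of_bool (l - 1 - 1 = a - 1) * of_bool (b = a - 1 \<and> z = k))))"

lemma kernel_weights_eq:
  assumes "p \<le> b + 1"
  shows "kernel_lhs_weight a l k b p z = kernel_rhs_weight a l k b p z"
proof -
  consider "l = 0" | "l = 1" | l' where "l = Suc (Suc l')"
    by (metis One_nat_def not0_implies_Suc)
  then show ?thesis
    unfolding kernel_lhs_weight_def kernel_rhs_weight_def of_bool_def
    by cases (use assms in \<open>cases k; cases a; auto\<close>)+
qed

lemma kernel_lhs_nth:
  assumes "r \<ge> 1"
  shows "((V * delta 1 - 1) * G r) $ a $ Suc n $ l $ k =
      of_bool (n = r \<and> a = 1 \<and> l = 2 \<and> k = r) - of_bool (n = r \<and> a = 1 \<and> l = 1 \<and> k = r)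
    + (\<Sum>w\<in>Gseqs_length r n. kernel_lhs_weight a l k (asc w) (last w) (zeros w))"
proof -
  have "(V * delta 1 - 1) * G r = V * G r - V * (T * G r) + V * (T * (U * G r)) - G r"
    unfolding delta_1 delta1_def by (simp add: algebra_simps)
  then have "((V * delta 1 - 1) * G r) $ a $ Suc n $ l $ k =
      of_bool (l \<noteq> 0) * of_bool (n = r \<and> a = 1 \<and> l - 1 = 1 \<and> k = r)
    - of_bool (n = r \<and> a = 1 \<and> l = 1 \<and> k = r)
    + (\<Sum>w\<in>Gseqs_length r n. kernel_lhs_weight a l k (asc w) (last w) (zeros w))"
    by (simp only: fps_add_nth fps_sub_nth U_mult_nth T_mult_nth V_mult_nth G_nth_Suc[OF assms]
        diff_Suc_1)
      (simp add: G_nth kernel_lhs_weight_def sum.distrib sum_subtractf sum_distrib_left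
        ring_distribs)
  also have "of_bool (l \<noteq> 0) * of_bool (n = r \<and> a = 1 \<and> l - 1 = 1 \<and> k = r)
      = (of_bool (n = r \<and> a = 1 \<and> l = 2 \<and> k = r) :: rat)"
    by auto
  finally show ?thesis .
qed

definition kernel_rhs :: "nat \<Rightarrow> mfps" where
  "kernel_rhs r = (V - 1) * V * base_term r + T * (Z * (V - 1) - V) * G_v1 r
    + T * U * V\<^sup>2 * (G_v1 r oo (U * V))"

lemma kernel_rhs_expand:
  "kernel_rhs r = V * (V * base_term r) - V * base_term r + T * (Z * (V * G_v1 r))
     - T * (Z * G_v1 r) - T * (V * G_v1 r) + T * (U * (V * (V * (G_v1 r oo (U * V)))))"
  by (simp add: kernel_rhs_def algebra_simps power2_eq_square)

lemma kernel_rhs_nth: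
  "kernel_rhs r $ a $ Suc n $ l $ k =
      of_bool (n = r \<and> a = 1 \<and> l = 2 \<and> k = r) - of_bool (n = r \<and> a = 1 \<and> l = 1 \<and> k = r)
    + (\<Sum>w\<in>Gseqs_length r n. kernel_rhs_weight a l k (asc w) (last w) (zeros w))"
proof -
  have "kernel_rhs r $ a $ Suc n $ l $ k =
      of_bool (l \<noteq> 0) * of_bool (l - 1 \<noteq> 0) * of_bool (a = 1 \<and> n = r \<and> l - 1 - 1 = 0 \<and> k = r)
    - of_bool (l \<noteq> 0) * of_bool (a = 1 \<and> n = r \<and> l - 1 = 0 \<and> k = r)
    + (\<Sum>w\<in>Gseqs_length r n. kernel_rhs_weight a l k (asc w) (last w) (zeros w))"
    unfolding kernel_rhs_expand
    by (simp only: fps_add_nth fps_sub_nth U_mult_nth T_mult_nth V_mult_nth Z_mult_nth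
        base_term_nth G_v1_compose_UV_nth G_v1_nth diff_Suc_1)
      (simp add: kernel_rhs_weight_def sum.distrib sum_subtractf sum_distrib_left ring_distribs)
  also have "of_bool (l \<noteq> 0) * of_bool (l - 1 \<noteq> 0) * of_bool (a = 1 \<and> n = r \<and> l - 1 - 1 = 0 \<and> k = r)
    - of_bool (l \<noteq> 0) * of_bool (a = 1 \<and> n = r \<and> l - 1 = 0 \<and> k = r)
    = of_bool (n = r \<and> a = 1 \<and> l = 2 \<and> k = r) - (of_bool (n = r \<and> a = 1 \<and> l = 1 \<and> k = r) :: rat)"
    by auto
  finally show ?thesis .
qed

lemma kernel_equation:
  assumes "r \<ge> 1"
  shows "(V * delta 1 - 1) * G r = kernel_rhs r"
proof (rule mfps_eqI)
  fix a n l k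
  show "((V * delta 1 - 1) * G r) $ a $ n $ l $ k = kernel_rhs r $ a $ n $ l $ k"
  proof (cases n)
    case 0
    then show ?thesis
      unfolding kernel_rhs_expand delta_1 delta1_def
      by (simp add: algebra_simps U_mult_nth T_mult_nth V_mult_nth G_nth_0 base_term_nth)
  next
    case (Suc m)
    have "kernel_lhs_weight a l k (asc w) (last w) (zeros w)
        = kernel_rhs_weight a l k (asc w) (last w) (zeros w)" if "w \<in> Gseqs_length r m" for w
      using that by (intro kernel_weights_eq ascent_seq_last_le)
        (simp add: Gseqs_length_def Gseqs_def)
    then show ?thesis
      unfolding Suc kernel_lhs_nth[OF assms] kernel_rhs_nth by simp
  qed
qed

section \<open>Coefficients with respect to v\<close>

definition v_coeff :: "nat \<Rightarrow> mfps \<Rightarrow> mfps" where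
  "v_coeff j F = Abs_fps (\<lambda>a. Abs_fps (\<lambda>n. fps_const (F $ a $ n $ j)))"

definition v_free :: "mfps \<Rightarrow> bool" where
  "v_free F \<longleftrightarrow> v_coeff 0 F = F"

lemma v_coeff_add [simp]: "v_coeff j (F + H) = v_coeff j F + v_coeff j H"
  by (intro fps_ext) (simp add: v_coeff_def)

lemma v_coeff_diff [simp]: "v_coeff j (F - H) = v_coeff j F - v_coeff j H"
  by (intro fps_ext) (simp add: v_coeff_def)

lemma v_coeff_V_mult: "v_coeff j (V * F) = (if j = 0 then 0 else v_coeff (j - 1) F)"
  by (cases j) (auto intro!: fps_ext simp: v_coeff_def V_def)

lemma v_coeff_v_coeff: "v_coeff j (v_coeff i F) = (if j = 0 then v_coeff i F else 0)"
  by (intro fps_ext) (simp add: v_coeff_def)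

lemma v_coeff_v_free: "v_free F \<Longrightarrow> v_coeff j F = (if j = 0 then F else 0)"
  unfolding v_free_def by (metis v_coeff_v_coeff)

lemma v_coeff_v_free_mult:
  assumes "v_free c"
  shows "v_coeff j (c * F) = c * v_coeff j F"
proof (rule fps_ext, rule fps_ext)
  fix a n
  define h where "h i p = c $ i $ p $ 0" for i p
  have h: "c $ i $ p = fps_const (h i p)" for i p
  proof -
    have "c $ i $ p = v_coeff 0 c $ i $ p" using assms by (simp add: v_free_def)
    then show ?thesis by (simp add: v_coeff_def h_def)
  qed
  have "(c * F) $ a $ n $ j = (\<Sum>i=0..a. \<Sum>p=0..n. h i p * F $ (a - i) $ (n - p) $ j)"
    by (simp add: fps_mult_nth[where 'a = "rat fps fps fps"] fps_mult_nth[where 'a = "rat fps fps"]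
        fps_sum_nth h)
  moreover have "(c * v_coeff j F) $ a $ n
      = fps_const (\<Sum>i=0..a. \<Sum>p=0..n. h i p * F $ (a - i) $ (n - p) $ j)"
    by (simp add: fps_mult_nth[where 'a = "rat fps fps fps"] fps_mult_nth[where 'a = "rat fps fps"]
        fps_sum_nth v_coeff_def fps_const_sum h)
  ultimately show "v_coeff j (c * F) $ a $ n = (c * v_coeff j F) $ a $ n"
    by (simp add: v_coeff_def)
qed

lemma v_free_add: "v_free F \<Longrightarrow> v_free H \<Longrightarrow> v_free (F + H)"
  by (simp add: v_free_def)

lemma v_free_diff: "v_free F \<Longrightarrow> v_free H \<Longrightarrow> v_free (F - H)"
  by (simp add: v_free_def)

lemma v_free_mult:
  assumes "v_free F" "v_free H"
  shows "v_free (F * H)"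
  using v_coeff_v_free_mult[OF assms(1), of 0 H] assms(2) by (simp add: v_free_def)

lemma v_free_1: "v_free 1"
  unfolding v_free_def by (intro fps_ext) (simp add: v_coeff_def)

lemma v_free_power: "v_free F \<Longrightarrow> v_free (F ^ n)"
  by (induction n) (simp_all add: v_free_1 v_free_mult)

lemma v_free_U: "v_free U"
  unfolding v_free_def by (intro fps_ext) (simp add: v_coeff_def U_def)

lemma v_free_T: "v_free T"
  unfolding v_free_def by (intro fps_ext) (simp add: v_coeff_def T_def)

lemma v_free_Z: "v_free Z"
  unfolding v_free_def by (intro fps_ext) (simp add: v_coeff_def Z_def)

lemma v_free_G_v1: "v_free (G_v1 r)"
  unfolding v_free_def by (intro fps_ext) (simp add: v_coeff_def G_v1_def)

lemma v_coeff_G_v1_compose_UV: "v_coeff j (G_v1 r oo (U * V)) = U ^ j * fps_const (G_v1 r $ j)"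
  unfolding U_times_V fps_compose_linear
  by (intro fps_ext) (simp add: v_coeff_def G_v1_def U_def fps_const_power fps_X_power_mult_nth)

section \<open>The kernel method\<close>

definition vroot :: mfps where
  "vroot = inverse delta1"

definition phi :: mfps where
  "phi = U * vroot"

lemma delta1_vroot: "delta1 * vroot = 1"
  unfolding vroot_def by (rule mfps_right_inverse) (simp add: delta1_def)

lemma phi_nth_0: "phi $ 0 = 0"
  by (simp add: phi_def U_def)

lemma v_free_delta1: "v_free delta1"
  unfolding delta1_def by (intro v_free_add v_free_diff v_free_mult v_free_1 v_free_T v_free_U)

lemma v_free_base_term: "v_free (base_term r)"
  unfolding base_term_def by (intro v_free_mult v_free_power v_free_T v_free_Z v_free_U)

lemma v_coeff_kernel_rhs:
  "v_coeff j (kernel_rhs r) =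
      (if j = 2 then base_term r else 0) - (if j = 1 then base_term r else 0)
    + (if j = 1 then T * Z * G_v1 r else 0) - (if j = 0 then T * Z * G_v1 r else 0)
    - (if j = 1 then T * G_v1 r else 0)
    + (if 2 \<le> j then T * U * (U ^ (j - 2) * fps_const (G_v1 r $ (j - 2))) else 0)"
proof -
  have "kernel_rhs r = V * (V * base_term r) - V * base_term r + V * (T * Z * G_v1 r)
      - T * Z * G_v1 r - V * (T * G_v1 r) + V * (V * (T * U * (G_v1 r oo (U * V))))"
    by (simp add: kernel_rhs_def algebra_simps power2_eq_square)
  moreover have "v_free (T * Z * G_v1 r)" "v_free (T * G_v1 r)" "v_free (T * U)"
    by (intro v_free_mult v_free_T v_free_Z v_free_U v_free_G_v1)+
  ultimately show ?thesis
    by (simp add: v_coeff_V_mult v_coeff_v_free v_free_base_term v_coeff_v_free_mult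
        v_coeff_G_v1_compose_UV numeral_2_eq_2)
qed

lemma v_coeff_kernel_rhs_G:
  assumes "r \<ge> 1"
  shows "v_coeff j (kernel_rhs r)
    = (if j = 0 then 0 else delta1 * v_coeff (j - 1) (G r)) - v_coeff j (G r)"
proof -
  have "kernel_rhs r = V * (delta1 * G r) - G r"
    unfolding kernel_equation[OF assms, symmetric] delta_1 by (simp add: algebra_simps)
  then show ?thesis
    by (simp add: v_coeff_V_mult v_coeff_v_free_mult[OF v_free_delta1])
qed

lemma fps_vanishes_below_v_coeff_G: "fps_vanishes_below (v_coeff j (G r)) (j - 1)"
  unfolding fps_vanishes_below_def
proof (intro allI impI)
  fix b assume "b < j - 1"
  then have "G r $ b $ n $ j = 0" for n
    by (intro fps_ext) (simp add: G_nth_eq_0_if_last_big)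
  then show "v_coeff j (G r) $ b = 0"
    by (intro fps_ext) (simp add: v_coeff_def)
qed

text \<open>
  Substituting V := vroot is not a composition of power series, as V is the innermost
  variable; it is carried out on the partial sums over the v-coefficients. By the functional
  equation these partial sums telescope, and the remainder has u-order at least J - 1 because
  the last entry of an ascent sequence exceeds its number of ascents by at most one.
\<close>

lemma kernel_rhs_partial_sum_telescope:
  assumes "r \<ge> 1"
  shows "(\<Sum>j\<le>J. v_coeff j (kernel_rhs r) * vroot ^ j) = - (v_coeff J (G r) * vroot ^ J)"
proof (induction J)
  case 0
  show ?case by (simp add: v_coeff_kernel_rhs_G[OF assms])
next
  case (Suc J)
  have "(\<Sum>j\<le>Suc J. v_coeff j (kernel_rhs r) * vroot ^ j)
      = - (v_coeff J (G r) * vroot ^ J)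
        + (delta1 * v_coeff J (G r) - v_coeff (Suc J) (G r)) * vroot ^ Suc J"
    using Suc.IH by (simp add: v_coeff_kernel_rhs_G[OF assms])
  also have "\<dots> = - (v_coeff J (G r) * vroot ^ J) + v_coeff J (G r) * vroot ^ J * (delta1 * vroot)
      - v_coeff (Suc J) (G r) * vroot ^ Suc J"
    by (simp add: algebra_simps)
  also have "\<dots> = - (v_coeff (Suc J) (G r) * vroot ^ Suc J)"
    by (simp add: delta1_vroot)
  finally show ?case .
qed

lemma kernel_rhs_partial_sum:
  "(\<Sum>j\<le>m + 2. v_coeff j (kernel_rhs r) * vroot ^ j)
    = base_term r * vroot\<^sup>2 - base_term r * vroot + T * Z * G_v1 r * vroot - T * Z * G_v1 r
      - T * G_v1 r * vroot + T * U * vroot\<^sup>2 * (\<Sum>i\<le>m. fps_const (G_v1 r $ i) * phi ^ i)"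
proof (induction m)
  case 0
  have "(\<Sum>j\<le>2. f j) = f 0 + f 1 + f (2::nat)" for f :: "nat \<Rightarrow> mfps"
    by (simp add: numeral_2_eq_2)
  then show ?case by (simp add: v_coeff_kernel_rhs algebra_simps power2_eq_square)
next
  case (Suc m)
  have "v_coeff (m + 3) (kernel_rhs r) = T * U * (U ^ Suc m * fps_const (G_v1 r $ Suc m))"
    by (simp add: v_coeff_kernel_rhs)
  then show ?case
    using Suc.IH
    by (simp add: numeral_3_eq_3 phi_def power_mult_distrib algebra_simps power2_eq_square)
qed

lemma kernel_rhs_at_root:
  assumes "r \<ge> 1"
  shows "base_term r * vroot\<^sup>2 - base_term r * vroot + T * Z * G_v1 r * vroot - T * Z * G_v1 r
      - T * G_v1 r * vroot + T * U * vroot\<^sup>2 * (G_v1 r oo phi) = 0" (is "?K = 0")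
proof (rule fps_ext)
  fix a
  define P where "P = (\<Sum>i\<le>a. fps_const (G_v1 r $ i) * phi ^ i)"
  have "?K = (\<Sum>j\<le>a + 2. v_coeff j (kernel_rhs r) * vroot ^ j)
      + T * U * vroot\<^sup>2 * ((G_v1 r oo phi) - P)"
    unfolding kernel_rhs_partial_sum P_def by (simp add: algebra_simps)
  also have "\<dots> = - (v_coeff (a + 2) (G r) * vroot ^ (a + 2))
      + T * U * vroot\<^sup>2 * ((G_v1 r oo phi) - P)"
    unfolding kernel_rhs_partial_sum_telescope[OF assms] ..
  finally have K: "?K = \<dots>" .
  have "fps_vanishes_below (v_coeff (a + 2) (G r) * vroot ^ (a + 2)) (Suc a)"
    using fps_vanishes_below_mult_left[OF fps_vanishes_below_v_coeff_G[of "a + 2" r]] by simp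
  moreover have "fps_vanishes_below (T * U * vroot\<^sup>2 * ((G_v1 r oo phi) - P)) (Suc a)"
    unfolding P_def
    by (rule fps_vanishes_below_mult_right
        [OF fps_vanishes_below_compose_minus_partial[OF phi_nth_0]])
  ultimately show "?K $ a = 0 $ a"
    unfolding K by (simp add: fps_vanishes_below_def)
qed

lemma G_v1_equation:
  assumes "r \<ge> 1"
  shows "delta1 * gamma1 * G_v1 r = base_term r * (1 - U) + U * (G_v1 r oo phi)"
proof -
  let ?C = "G_v1 r oo phi"
  have "delta1\<^sup>2 * (base_term r * vroot\<^sup>2 - base_term r * vroot + T * Z * G_v1 r * vroot
      - T * Z * G_v1 r - T * G_v1 r * vroot + T * U * vroot\<^sup>2 * ?C)
    = base_term r * (delta1 * vroot)\<^sup>2 - base_term r * delta1 * (delta1 * vroot)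
      + T * Z * G_v1 r * delta1 * (delta1 * vroot) - T * Z * G_v1 r * delta1\<^sup>2
      - T * G_v1 r * delta1 * (delta1 * vroot) + T * U * (delta1 * vroot)\<^sup>2 * ?C"
    by (simp add: algebra_simps power2_eq_square)
  also have "\<dots> = T * (base_term r * (1 - U) - delta1 * gamma1 * G_v1 r + U * ?C)"
    unfolding delta1_vroot
    by (simp add: base_term_def delta1_def gamma1_def algebra_simps power2_eq_square)
  finally have "T * (base_term r * (1 - U) - delta1 * gamma1 * G_v1 r + U * ?C) = 0"
    using kernel_rhs_at_root[OF assms] by simp
  moreover have "T \<noteq> 0" by (simp add: T_def)
  ultimately have "base_term r * (1 - U) - delta1 * gamma1 * G_v1 r + U * ?C = 0" by simp
  then show ?thesis by (simp add: algebra_simps)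
qed

section \<open>Solving the equation for G_v1 by iteration\<close>

definition denom :: "nat \<Rightarrow> mfps" where
  "denom s = delta s * delta (s + 1) * (\<Prod>i=1..s+1. gamma i)"

definition summand :: "nat \<Rightarrow> mfps" where
  "summand s = U ^ s * (1 - T) ^ s * inverse (denom s)"

definition G_v1_solution :: "nat \<Rightarrow> mfps" where
  "G_v1_solution r = base_term r * (1 - U) * (\<Sum>s. summand s)"

lemma const_term_delta [simp]: "const_term (delta s) = 1"
  by (simp add: delta_def)

lemma const_term_gamma [simp]: "const_term (gamma s) = 1"
  by (simp add: gamma_def)

lemma denom_right_inverse: "denom s * inverse (denom s) = 1"
  by (rule mfps_right_inverse) (simp add: denom_def)

lemma denom_nonzero: "denom s \<noteq> 0"
  using denom_right_inverse[of s] by auto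

lemma summand_vanishes_below: "fps_vanishes_below (summand s) s"
  unfolding summand_def U_def mult.assoc by (rule fps_vanishes_below_X_power_mult)

lemma denom_0: "denom 0 = delta1 * gamma1"
proof -
  have "denom 0 = delta 0 * delta 1 * gamma 1" by (simp add: denom_def)
  then show ?thesis by (simp only: delta_1 gamma_1) (simp add: delta_def)
qed

lemmas fps_compose_phi_distrib = fps_compose_add_distrib fps_compose_sub_distrib
  fps_compose_mult_distrib[OF phi_nth_0] fps_compose_power[OF phi_nth_0, symmetric]
  fps_compose_prod_distrib[OF phi_nth_0]

lemma U_compose_phi: "U oo phi = phi"
  by (simp add: U_def phi_nth_0)

lemma T_compose_phi: "T oo phi = T"
  by (simp add: T_def)

lemma Z_compose_phi: "Z oo phi = Z"
  by (simp add: Z_def)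

lemma phi_delta1: "phi * delta1 = U"
  by (simp add: phi_def mult.assoc mult.commute[of vroot] delta1_vroot)

lemma delta_compose_phi: "(delta s oo phi) * delta1 = delta (s + 1)"
proof (cases "s = 0")
  case True
  then show ?thesis by (simp add: delta_def delta1_def algebra_simps)
next
  case False
  have "(delta s oo phi) * delta1 = (phi - (1 - T) ^ s * (phi - 1)) * delta1"
    using False by (simp add: delta_def fps_compose_phi_distrib U_compose_phi T_compose_phi)
  also have "\<dots> = phi * delta1 - (1 - T) ^ s * (phi * delta1 - delta1)"
    by (simp add: algebra_simps)
  also have "\<dots> = delta (s + 1)"
    unfolding phi_delta1 by (simp add: delta_def delta1_def algebra_simps)
  finally show ?thesis .
qed

lemma gamma_compose_phi:
  assumes "s \<ge> 1"
  shows "(gamma s oo phi) * delta1 = gamma (s + 1)"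
proof -
  have "(gamma s oo phi) * delta1 = (phi - (1 - Z * T) * (1 - T) ^ (s - 1) * (phi - 1)) * delta1"
    using assms by (simp add: gamma_def fps_compose_phi_distrib U_compose_phi T_compose_phi
        Z_compose_phi)
  also have "\<dots> = phi * delta1 - (1 - Z * T) * (1 - T) ^ (s - 1) * (phi * delta1 - delta1)"
    by (simp add: algebra_simps)
  also have "\<dots> = gamma (s + 1)"
    unfolding phi_delta1 using assms
    by (cases s) (simp_all add: gamma_def delta1_def algebra_simps)
  finally show ?thesis .
qed

lemma prod_gamma_compose_phi: "(\<Prod>i=1..n. gamma i oo phi) * delta1 ^ n = (\<Prod>i=2..n+1. gamma i)"
proof (induction n)
  case (Suc n)
  have "(\<Prod>i=1..Suc n. gamma i oo phi) * delta1 ^ Suc n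
      = ((\<Prod>i=1..n. gamma i oo phi) * delta1 ^ n) * ((gamma (Suc n) oo phi) * delta1)"
    by (simp add: prod.cl_ivl_Suc algebra_simps)
  also have "\<dots> = (\<Prod>i=2..Suc n+1. gamma i)"
    using Suc.IH gamma_compose_phi[of "Suc n"] by (simp add: prod.cl_ivl_Suc)
  finally show ?case .
qed simp

lemma denom_Suc: "denom (s + 1) = (denom s oo phi) * delta1 ^ (s + 3) * gamma1"
proof -
  have "(denom s oo phi) * delta1 ^ (s + 3) * gamma1
     = ((delta s oo phi) * delta1) * ((delta (s + 1) oo phi) * delta1)
       * ((\<Prod>i=1..s+1. gamma i oo phi) * delta1 ^ (s + 1)) * gamma1"
    by (simp add: denom_def fps_compose_phi_distrib algebra_simps numeral_3_eq_3)
  also have "\<dots> = delta (s + 1) * delta (s + 1 + 1) * (\<Prod>i=2..s+1+1. gamma i) * gamma 1"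
    by (simp only: delta_compose_phi prod_gamma_compose_phi gamma_1)
  also have "\<dots> = denom (s + 1)"
    by (simp add: denom_def prod.atLeast_Suc_atMost numeral_2_eq_2 ac_simps)
  finally show ?thesis by simp
qed

lemma summand_compose_phi:
  "U * ((base_term r * (1 - U)) oo phi) * (summand s oo phi)
    = delta1 * gamma1 * (base_term r * (1 - U)) * summand (s + 1)"
proof -
  define w where "w = inverse (denom s) oo phi"
  have inv_w: "(denom s oo phi) * w = 1"
    unfolding w_def
    by (simp add: denom_right_inverse flip: fps_compose_mult_distrib[OF phi_nth_0])
  have "(1 - phi) * delta1 = delta1 - phi * delta1" by (simp add: algebra_simps)
  then have one_minus_phi: "(1 - phi) * delta1 = (1 - U) * (1 - T)"
    unfolding phi_delta1 by (simp add: delta1_def algebra_simps)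
  have "U * ((base_term r * (1 - U)) oo phi) * (summand s oo phi) * denom (s + 1)
      = U * (T ^ (r + 1) * Z ^ r) * (phi * delta1) ^ (s + 1) * ((1 - phi) * delta1)
        * (1 - T) ^ s * delta1 * gamma1 * ((denom s oo phi) * w)"
    unfolding denom_Suc w_def
    by (simp add: base_term_def summand_def fps_compose_phi_distrib U_compose_phi T_compose_phi
        Z_compose_phi power_mult_distrib algebra_simps numeral_3_eq_3)
  also have "\<dots> = U * (T ^ (r + 1) * Z ^ r) * U ^ (s + 1) * ((1 - U) * (1 - T))
        * (1 - T) ^ s * delta1 * gamma1"
    unfolding phi_delta1 one_minus_phi inv_w by simp
  also have "\<dots> = delta1 * gamma1 * (base_term r * (1 - U)) * (U ^ (s + 1) * (1 - T) ^ (s + 1))"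
    by (simp add: base_term_def algebra_simps)
  also have "U ^ (s + 1) * (1 - T) ^ (s + 1)
      = U ^ (s + 1) * (1 - T) ^ (s + 1) * (denom (s + 1) * inverse (denom (s + 1)))"
    by (simp only: denom_right_inverse mult_1_right)
  also have "\<dots> = summand (s + 1) * denom (s + 1)"
    by (simp add: summand_def ac_simps)
  finally show ?thesis using denom_nonzero[of "s + 1"] by (simp add: mult.assoc)
qed

lemma G_v1_solution_equation:
  "delta1 * gamma1 * G_v1_solution r = base_term r * (1 - U) + U * (G_v1_solution r oo phi)"
proof -
  let ?B = "base_term r * (1 - U)"
  have shifted: "fps_vanishes_below (summand (Suc s)) s" for s
    using summand_vanishes_below[of "Suc s"] by (simp add: fps_vanishes_below_def)
  have "U * (G_v1_solution r oo phi) = U * (?B oo phi) * ((\<Sum>s. summand s) oo phi)"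
    by (simp add: G_v1_solution_def fps_compose_mult_distrib[OF phi_nth_0] mult.assoc)
  also have "\<dots> = U * (?B oo phi) * (\<Sum>s. summand s oo phi)"
    by (simp add: suminf_compose_fps[OF summand_vanishes_below])
  also have "\<dots> = (\<Sum>s. U * (?B oo phi) * (summand s oo phi))"
    by (rule suminf_mult_left_fps)
      (rule fps_vanishes_below_compose[OF summand_vanishes_below])
  also have "\<dots> = (\<Sum>s. delta1 * gamma1 * ?B * summand (Suc s))"
    by (simp add: summand_compose_phi)
  also have "\<dots> = delta1 * gamma1 * ?B * (\<Sum>s. summand (Suc s))"
    by (rule suminf_mult_left_fps[OF shifted, symmetric])
  finally have tail: "U * (G_v1_solution r oo phi) = \<dots>" .
  have "delta1 * gamma1 * ?B * summand 0 = ?B * (denom 0 * inverse (denom 0))"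
    by (simp add: summand_def denom_0 ac_simps)
  then have head: "delta1 * gamma1 * ?B * summand 0 = ?B"
    by (simp only: denom_right_inverse mult_1_right)
  have "delta1 * gamma1 * G_v1_solution r
      = delta1 * gamma1 * ?B * summand 0 + delta1 * gamma1 * ?B * (\<Sum>s. summand (Suc s))"
    unfolding G_v1_solution_def suminf_fps_split_head[OF summand_vanishes_below]
    by (simp add: algebra_simps)
  then show ?thesis
    unfolding head tail .
qed

lemma G_v1_equation_unique:
  assumes "delta1 * gamma1 * X = U * (X oo phi)"
  shows "X = 0"
proof (rule fps_ext)
  have "const_term (delta1 * gamma1) = 1" by (simp add: delta1_def gamma1_def)
  then have "(delta1 * gamma1) $ 0 \<noteq> 0"
    unfolding const_term_def by (metis fps_zero_nth zero_neq_one)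
  fix a
  show "X $ a = 0 $ a"
  proof (induction a rule: less_induct)
    case (less a)
    have "(delta1 * gamma1 * X) $ a = (delta1 * gamma1) $ 0 * X $ a"
      using less by (auto simp: fps_mult_nth sum.atLeast_Suc_atMost intro!: sum.neutral)
    moreover have "(U * (X oo phi)) $ a = 0"
      using less by (cases a) (auto simp: U_def fps_compose_nth intro!: sum.neutral)
    ultimately show ?case
      using assms \<open>(delta1 * gamma1) $ 0 \<noteq> 0\<close> by simp
  qed
qed

lemma G_v1_eq_solution:
  assumes "r \<ge> 1"
  shows "G_v1 r = G_v1_solution r"
proof -
  have "delta1 * gamma1 * (G_v1 r - G_v1_solution r)
      = delta1 * gamma1 * G_v1 r - delta1 * gamma1 * G_v1_solution r"
    by (simp add: algebra_simps)
  also have "\<dots> = U * (G_v1 r oo phi) - U * (G_v1_solution r oo phi)"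
    unfolding G_v1_equation[OF assms] G_v1_solution_equation by simp
  also have "\<dots> = U * ((G_v1 r - G_v1_solution r) oo phi)"
    by (simp add: fps_compose_sub_distrib algebra_simps)
  finally have "delta1 * gamma1 * (G_v1 r - G_v1_solution r)
      = U * ((G_v1 r - G_v1_solution r) oo phi)" .
  then have "G_v1 r - G_v1_solution r = 0" by (rule G_v1_equation_unique)
  then show ?thesis by simp
qed

section \<open>Substituting uv for u\<close>

definition summand_bar :: "nat \<Rightarrow> mfps" where
  "summand_bar s = (U * V) ^ s * (1 - T) ^ s
     * inverse (deltabar s * deltabar (s + 1) * (\<Prod>i=1..s+1. gammabar i))"

lemma UV_nth_0: "(U * V) $ 0 = 0"
  by (simp add: U_def)

lemmas fps_compose_UV_distrib = fps_compose_add_distrib fps_compose_sub_distrib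
  fps_compose_mult_distrib[OF UV_nth_0] fps_compose_power[OF UV_nth_0, symmetric]
  fps_compose_prod_distrib[OF UV_nth_0]

lemma U_compose_UV: "U oo (U * V) = U * V"
  using UV_nth_0 by (simp add: U_def)

lemma T_compose_UV: "T oo (U * V) = T"
  by (simp add: T_def)

lemma Z_compose_UV: "Z oo (U * V) = Z"
  by (simp add: Z_def)

lemma delta_compose_UV: "delta s oo (U * V) = deltabar s"
  by (simp add: delta_def deltabar_def fps_compose_UV_distrib U_compose_UV T_compose_UV)

lemma gamma_compose_UV: "gamma s oo (U * V) = gammabar s"
  by (simp add: gamma_def gammabar_def fps_compose_UV_distrib U_compose_UV T_compose_UV
      Z_compose_UV)

lemma inverse_compose_UV:
  assumes "const_term F \<noteq> 0"
  shows "inverse F oo (U * V) = inverse (F oo (U * V))"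
proof (rule mfps_inverse_unique[symmetric])
  show "const_term (F oo (U * V)) \<noteq> 0"
    using assms by (simp add: const_term_def fps_compose_nth)
  show "(F oo (U * V)) * (inverse F oo (U * V)) = 1"
    using mfps_right_inverse[OF assms] by (simp flip: fps_compose_mult_distrib[OF UV_nth_0])
qed

lemma denom_compose_UV:
  "denom s oo (U * V) = deltabar s * deltabar (s + 1) * (\<Prod>i=1..s+1. gammabar i)"
  by (simp add: denom_def fps_compose_UV_distrib delta_compose_UV gamma_compose_UV)

lemma summand_compose_UV: "summand s oo (U * V) = summand_bar s"
proof -
  have "const_term (denom s) \<noteq> 0" by (simp add: denom_def)
  then show ?thesis
    unfolding summand_def summand_bar_def
    by (simp add: fps_compose_UV_distrib U_compose_UV T_compose_UV inverse_compose_UV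
        denom_compose_UV)
qed

lemma G_v1_solution_compose_UV:
  "G_v1_solution r oo (U * V) = base_term r * V * (1 - U * V) * (\<Sum>s. summand_bar s)"
  by (simp add: G_v1_solution_def base_term_def fps_compose_UV_distrib U_compose_UV T_compose_UV
      Z_compose_UV suminf_compose_fps[OF summand_vanishes_below] summand_compose_UV algebra_simps)

lemma G_main_equation:
  assumes "r \<ge> 1"
  shows "(V * delta 1 - 1) * G r = base_term r * (V * (V - 1)
      + T * (1 - U) * (Z * (V - 1) - V) * (\<Sum>s. summand s)
      + U * V ^ 3 * T * (1 - U * V) * (\<Sum>s. summand_bar s))"
  unfolding kernel_equation[OF assms] kernel_rhs_def G_v1_eq_solution[OF assms]
    G_v1_solution_compose_UV
  by (simp add: G_v1_solution_def algebra_simps power2_eq_square power3_eq_cube)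

theorem theorem3:
  fixes r :: nat
  assumes "r \<ge> 1"
  shows "G r = T ^ (r + 1) * Z ^ r * U * inverse (V * delta 1 - 1) *
    (V * (V - 1)
     + T * (1 - U) * (Z * (V - 1) - V) *
         (\<Sum>s. U ^ s * (1 - T) ^ s *
            inverse (delta s * delta (s + 1) * (\<Prod>i=1..s+1. gamma i)))
     + U * V ^ 3 * T * (1 - U * V) *
         (\<Sum>s. (U * V) ^ s * (1 - T) ^ s *
            inverse (deltabar s * deltabar (s + 1) * (\<Prod>i=1..s+1. gammabar i))))"
proof -
  define K where "K = V * delta 1 - 1"
  have "inverse K * K = 1"
    unfolding K_def delta_1
    by (subst mult.commute, rule mfps_right_inverse) (simp add: delta1_def)
  then have "G r = inverse K * (K * G r)"
    by (simp flip: mult.assoc)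
  moreover have "(\<lambda>s. U ^ s * (1 - T) ^ s
      * inverse (delta s * delta (s + 1) * (\<Prod>i=1..s+1. gamma i))) = summand"
    by (rule ext) (simp only: summand_def denom_def)
  moreover have "(\<lambda>s. (U * V) ^ s * (1 - T) ^ s
      * inverse (deltabar s * deltabar (s + 1) * (\<Prod>i=1..s+1. gammabar i))) = summand_bar"
    by (rule ext) (simp only: summand_bar_def)
  ultimately show ?thesis
    unfolding K_def G_main_equation[OF assms] by (simp add: base_term_def ac_simps)
qed

end
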